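(* Let $\mathcal{A}$ and $\mathcal{B}$ be alternative $W^{*}$-factors with identities $1_{\mathcal{A}},1_{\mathcal{B}}$, with $\mathcal{A}$ containing a projection $p\notin\{0,1_{\mathcal{A}}\}$, and let $\Phi:\mathcal{A}\to\mathcal{B}$ be a bijection satisfying $\Phi(ab+ba^{*})=\Phi(a)\Phi(b)+\Phi(b)\Phi(a)^{*}$ for all $a,b\in\mathcal{A}$. Then $\Phi(i\mathbb{R}1_{\mathcal{A}})=i\mathbb{R}1_{\mathcal{B}}$ and $\Phi(\mathbb{C}1_{\mathcal{A}})=\mathbb{C}1_{\mathcal{B}}$.
   Context: An alternative $W^{*}$-factor is a prime alternative $C^{*}$-algebra (complete normed alternative complex $\ast$-algebra with $\|a^{*}a\|=\|a\|^{2}$, where alternative means $a^{2}b=a(ab)$, $ba^{2}=(ba)a$) that is a dual Banach space; it is unital with center $\mathbb{C}1$. A projection is a nonzero self-adjoint idempotent. *)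

theory Defs
  imports Complex_Main
begin

text \<open>An algebra is given by a type of class banach (complete real normed space,
  supplying norm, addition and real scaling), together with a complex scalar
  multiplication smul (extending the real scaling), a (not necessarily associative)
  multiplication mul and an involution star.\<close>

definition alt_cstar_algebra ::
  "(complex \<Rightarrow> 'a::banach \<Rightarrow> 'a) \<Rightarrow> ('a \<Rightarrow> 'a \<Rightarrow> 'a) \<Rightarrow> ('a \<Rightarrow> 'a) \<Rightarrow> bool" where
  "alt_cstar_algebra smul mul star \<longleftrightarrow>
     \<comment> \<open>complex vector space structure extending the real one, compatible norm\<close>
     (\<forall>r x. smul (complex_of_real r) x = scaleR r x) \<and>
     (\<forall>c d x. smul (c * d) x = smul c (smul d x)) \<and>
     (\<forall>c d x. smul (c + d) x = smul c x + smul d x) \<and>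
     (\<forall>c x y. smul c (x + y) = smul c x + smul c y) \<and>
     (\<forall>c x. norm (smul c x) = cmod c * norm x) \<and>
     \<comment> \<open>bilinear multiplication\<close>
     (\<forall>x y z. mul (x + y) z = mul x z + mul y z) \<and>
     (\<forall>x y z. mul x (y + z) = mul x y + mul x z) \<and>
     (\<forall>c x y. mul (smul c x) y = smul c (mul x y)) \<and>
     (\<forall>c x y. mul x (smul c y) = smul c (mul x y)) \<and>
     \<comment> \<open>alternative laws\<close>
     (\<forall>a b. mul (mul a a) b = mul a (mul a b)) \<and>
     (\<forall>a b. mul b (mul a a) = mul (mul b a) a) \<and>
     \<comment> \<open>normed algebra\<close>
     (\<forall>a b. norm (mul a b) \<le> norm a * norm b) \<and>
     \<comment> \<open>involution\<close>
     (\<forall>x y. star (x + y) = star x + star y) \<and>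
     (\<forall>c x. star (smul c x) = smul (cnj c) (star x)) \<and>
     (\<forall>x. star (star x) = x) \<and>
     (\<forall>x y. star (mul x y) = mul (star y) (star x)) \<and>
     \<comment> \<open>C*-identity\<close>
     (\<forall>a. norm (mul (star a) a) = (norm a)\<^sup>2)"

definition alg_ideal ::
  "(complex \<Rightarrow> 'a::banach \<Rightarrow> 'a) \<Rightarrow> ('a \<Rightarrow> 'a \<Rightarrow> 'a) \<Rightarrow> 'a set \<Rightarrow> bool" where
  "alg_ideal smul mul I \<longleftrightarrow>
     0 \<in> I \<and> (\<forall>x\<in>I. \<forall>y\<in>I. x + y \<in> I) \<and> (\<forall>c. \<forall>x\<in>I. smul c x \<in> I) \<and>
     (\<forall>a. \<forall>x\<in>I. mul a x \<in> I \<and> mul x a \<in> I)"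

definition alg_prime ::
  "(complex \<Rightarrow> 'a::banach \<Rightarrow> 'a) \<Rightarrow> ('a \<Rightarrow> 'a \<Rightarrow> 'a) \<Rightarrow> bool" where
  "alg_prime smul mul \<longleftrightarrow>
     (\<forall>I J. alg_ideal smul mul I \<and> alg_ideal smul mul J \<and>
        (\<forall>x\<in>I. \<forall>y\<in>J. mul x y = 0) \<longrightarrow> I = {0} \<or> J = {0})"

definition bdd_clin_functional ::
  "(complex \<Rightarrow> 'a::banach \<Rightarrow> 'a) \<Rightarrow> ('a \<Rightarrow> complex) \<Rightarrow> bool" where
  "bdd_clin_functional smul f \<longleftrightarrow>
     (\<forall>x y. f (x + y) = f x + f y) \<and> (\<forall>c x. f (smul c x) = c * f x) \<and>
     (\<exists>K. \<forall>x. cmod (f x) \<le> K * norm x)"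

definition fnorm :: "('a::banach \<Rightarrow> complex) \<Rightarrow> real" where
  "fnorm f = (SUP x\<in>{x. norm x \<le> 1}. cmod (f x))"

text \<open>Dual Banach space: there is a predual, realised (as usual) as a norm-closed
  complex subspace F of the dual A* such that the canonical map a \<mapsto> (f \<mapsto> f a)
  is an isometric isomorphism of A onto F*.\<close>

definition dual_banach_space ::
  "(complex \<Rightarrow> 'a::banach \<Rightarrow> 'a) \<Rightarrow> bool" where
  "dual_banach_space smul \<longleftrightarrow>
    (\<exists>F. F \<subseteq> {f. bdd_clin_functional smul f} \<and>
         (\<lambda>x. 0) \<in> F \<and> (\<forall>f\<in>F. \<forall>g\<in>F. (\<lambda>x. f x + g x) \<in> F) \<and>
         (\<forall>c. \<forall>f\<in>F. (\<lambda>x. c * f x) \<in> F) \<and>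
         \<comment> \<open>closed in the dual norm\<close>
         (\<forall>s g. (\<forall>n. s n \<in> F) \<and> bdd_clin_functional smul g \<and>
               (\<lambda>n. fnorm (\<lambda>x. s n x - g x)) \<longlonglongrightarrow> 0 \<longrightarrow> g \<in> F) \<and>
         \<comment> \<open>canonical map is isometric\<close>
         (\<forall>a. \<forall>e>0. \<exists>f\<in>F. fnorm f \<le> 1 \<and> cmod (f a) \<ge> norm a - e) \<and>
         \<comment> \<open>canonical map is onto F*\<close>
         (\<forall>\<phi>. (\<forall>f\<in>F. \<forall>g\<in>F. \<phi> (\<lambda>x. f x + g x) = \<phi> f + \<phi> g) \<and>
               (\<forall>c. \<forall>f\<in>F. \<phi> (\<lambda>x. c * f x) = c * \<phi> f) \<and>
               (\<exists>K. \<forall>f\<in>F. cmod (\<phi> f) \<le> K * fnorm f)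
             \<longrightarrow> (\<exists>a. \<forall>f\<in>F. \<phi> f = f a)))"

definition is_unit :: "('a \<Rightarrow> 'a \<Rightarrow> 'a) \<Rightarrow> 'a \<Rightarrow> bool" where
  "is_unit mul u \<longleftrightarrow> (\<forall>x. mul u x = x \<and> mul x u = x)"

definition alg_one :: "('a \<Rightarrow> 'a \<Rightarrow> 'a) \<Rightarrow> 'a" where
  "alg_one mul = (THE u. is_unit mul u)"

definition alg_center :: "('a::ab_group_add \<Rightarrow> 'a \<Rightarrow> 'a) \<Rightarrow> 'a set" where
  "alg_center mul = {z. \<forall>x y. mul z x = mul x z \<and>
      mul (mul z x) y = mul z (mul x y) \<and>
      mul (mul x z) y = mul x (mul z y) \<and>
      mul (mul x y) z = mul x (mul y z)}"

definition alt_Wstar_factor ::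
  "(complex \<Rightarrow> 'a::banach \<Rightarrow> 'a) \<Rightarrow> ('a \<Rightarrow> 'a \<Rightarrow> 'a) \<Rightarrow> ('a \<Rightarrow> 'a) \<Rightarrow> bool" where
  "alt_Wstar_factor smul mul star \<longleftrightarrow>
     alt_cstar_algebra smul mul star \<and> alg_prime smul mul \<and> dual_banach_space smul \<and>
     (\<exists>u. is_unit mul u) \<and>
     alg_center mul = {smul c (alg_one mul) | c. True}"

definition is_projection ::
  "('a::banach \<Rightarrow> 'a \<Rightarrow> 'a) \<Rightarrow> ('a \<Rightarrow> 'a) \<Rightarrow> 'a \<Rightarrow> bool" where
  "is_projection mul star p \<longleftrightarrow> p \<noteq> 0 \<and> star p = p \<and> mul p p = p"

end

theory Submission
  imports Defs
begin

text \<open>Write \<open>a \<circ> b = a b + b a\<^sup>*\<close> for the Jordan \<open>*\<close>-product. The sets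
  \<open>S = {z. \<forall>b. z \<circ> b = 0}\<close> and \<open>W = {z. \<forall>b. \<forall>s\<in>S. (b \<circ> s) \<circ> z = 0}\<close> are defined by
  the product alone, so a bijection preserving it maps \<open>S\<^sub>A\<close> onto \<open>S\<^sub>B\<close> and \<open>W\<^sub>A\<close>
  onto \<open>W\<^sub>B\<close>. In a unital alternative \<open>*\<close>-algebra an element of \<open>S\<close> is skew and commutes
  with everything, and an element of \<open>W\<close> commutes with everything (test against
  \<open>b \<circ> (i1) = i(b + b\<^sup>*)\<close>). Since the associator is alternating, commuting elements are
  central; the centre being \<open>\<complex>1\<close>, this gives \<open>S = i\<real>1\<close> and \<open>W = \<complex>1\<close>.\<close>

definition left_annihilator :: "('a \<Rightarrow> 'b \<Rightarrow> 'c::zero) \<Rightarrow> 'a set" where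
  "left_annihilator f = {z. \<forall>b. f z b = 0}"

definition right_annihilator :: "('a \<Rightarrow> 'b \<Rightarrow> 'c::zero) \<Rightarrow> 'a set \<Rightarrow> 'b set" where
  "right_annihilator f X = {z. \<forall>x\<in>X. f x z = 0}"

definition products_with :: "('a \<Rightarrow> 'b \<Rightarrow> 'c) \<Rightarrow> 'b set \<Rightarrow> 'c set" where
  "products_with f X = {f a x | a x. x \<in> X}"

locale bij_product_hom =
  fixes \<Phi> :: "'a::zero \<Rightarrow> 'b::zero" and f :: "'a \<Rightarrow> 'a \<Rightarrow> 'a" and g :: "'b \<Rightarrow> 'b \<Rightarrow> 'b"
  assumes bij: "bij \<Phi>"
    and hom: "\<And>x y. \<Phi> (f x y) = g (\<Phi> x) (\<Phi> y)"
    and zero: "\<Phi> 0 = 0"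
begin

lemma eq_zero_iff: "\<Phi> x = 0 \<longleftrightarrow> x = 0"
  by (metis bij bij_is_inj injD zero)

lemma all_image_iff: "(\<forall>y. P y) \<longleftrightarrow> (\<forall>x. P (\<Phi> x))"
  by (metis bij bij_is_surj surj_f_inv_f)

lemma image_left_annihilator: "\<Phi> ` left_annihilator f = left_annihilator g"
proof -
  have "left_annihilator f = \<Phi> -` left_annihilator g"
    unfolding left_annihilator_def
    by (auto simp: all_image_iff[of "\<lambda>y. g _ y = 0"] hom[symmetric] eq_zero_iff)
  thus ?thesis by (simp add: bij bij_is_surj surj_image_vimage_eq)
qed

lemma image_right_annihilator: "\<Phi> ` right_annihilator f X = right_annihilator g (\<Phi> ` X)"
proof -
  have "right_annihilator f X = \<Phi> -` right_annihilator g (\<Phi> ` X)"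
    unfolding right_annihilator_def by (auto simp: hom[symmetric] eq_zero_iff)
  thus ?thesis by (simp add: bij bij_is_surj surj_image_vimage_eq)
qed

lemma image_products_with: "\<Phi> ` products_with f X = products_with g (\<Phi> ` X)"
proof -
  have "g (\<Phi> a) (\<Phi> x) \<in> \<Phi> ` products_with f X" if "x \<in> X" for a x
    using that unfolding products_with_def by (auto simp: hom[symmetric])
  hence "products_with g (\<Phi> ` X) \<subseteq> \<Phi> ` products_with f X"
    unfolding products_with_def[of g] by (auto, metis bij bij_is_surj surj_f_inv_f)
  moreover have "\<Phi> ` products_with f X \<subseteq> products_with g (\<Phi> ` X)"
    unfolding products_with_def by (fastforce simp: hom)
  ultimately show ?thesis by (rule subset_antisym[rotated])
qed

end

lemma bij_product_hom_zero:
  assumes "bij \<Phi>" and "\<And>x y. \<Phi> (f x y) = g (\<Phi> x) (\<Phi> y)"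
    and "\<And>y. f 0 y = 0" and "\<And>x. g x 0 = 0"
  shows "\<Phi> 0 = 0"
proof -
  obtain b where "\<Phi> b = 0" by (metis assms(1) bij_is_surj surj_f_inv_f)
  thus ?thesis by (metis assms(2-4))
qed

definition jordan_star_product :: "('a \<Rightarrow> 'a \<Rightarrow> 'a) \<Rightarrow> ('a \<Rightarrow> 'a) \<Rightarrow> 'a \<Rightarrow> 'a \<Rightarrow> 'a::plus" where
  "jordan_star_product mul star a b = mul a b + mul b (star a)"

text \<open>Only the algebraic axioms of an alternative \<open>C\<^sup>*\<close>-algebra enter the argument; the
  real scaling of the carrier type is the restriction of the complex one.\<close>

locale unital_alt_star_algebra =
  fixes smul :: "complex \<Rightarrow> 'a::real_vector \<Rightarrow> 'a" and mul :: "'a \<Rightarrow> 'a \<Rightarrow> 'a"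
    and star :: "'a \<Rightarrow> 'a"
  assumes smul_of_real: "\<And>r x. smul (complex_of_real r) x = r *\<^sub>R x"
    and smul_smul: "\<And>c d x. smul c (smul d x) = smul (c * d) x"
    and smul_add_left: "\<And>c d x. smul (c + d) x = smul c x + smul d x"
    and smul_add_right: "\<And>c x y. smul c (x + y) = smul c x + smul c y"
    and mul_add_left: "\<And>x y z. mul (x + y) z = mul x z + mul y z"
    and mul_add_right: "\<And>x y z. mul x (y + z) = mul x y + mul x z"
    and mul_smul_left: "\<And>c x y. mul (smul c x) y = smul c (mul x y)"
    and mul_smul_right: "\<And>c x y. mul x (smul c y) = smul c (mul x y)"
    and left_alternative: "\<And>a b. mul (mul a a) b = mul a (mul a b)"
    and right_alternative: "\<And>a b. mul b (mul a a) = mul (mul b a) a"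
    and star_add: "\<And>x y. star (x + y) = star x + star y"
    and star_smul: "\<And>c x. star (smul c x) = smul (cnj c) (star x)"
    and star_star: "\<And>x. star (star x) = x"
    and star_mul: "\<And>x y. star (mul x y) = mul (star y) (star x)"
    and has_unit: "\<exists>u. is_unit mul u"
begin

abbreviation one :: 'a where "one \<equiv> alg_one mul"

abbreviation jprod :: "'a \<Rightarrow> 'a \<Rightarrow> 'a" where "jprod \<equiv> jordan_star_product mul star"

lemma mul_diff_left: "mul (x - y) z = mul x z - mul y z"
  by (metis add_diff_cancel_right' diff_add_cancel mul_add_left)

lemma mul_diff_right: "mul z (x - y) = mul z x - mul z y"
  by (metis add_diff_cancel_right' diff_add_cancel mul_add_right)

lemma mul_zero_left [simp]: "mul 0 x = 0"
  by (metis diff_self mul_diff_left)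

lemma mul_zero_right [simp]: "mul x 0 = 0"
  by (metis diff_self mul_diff_right)

lemma mul_minus_left: "mul (- x) y = - mul x y"
  by (metis diff_0 mul_diff_left mul_zero_left)

lemma mul_minus_right: "mul y (- x) = - mul y x"
  by (metis diff_0 mul_diff_right mul_zero_right)

lemma star_diff: "star (x - y) = star x - star y"
  by (metis add_diff_cancel_right' diff_add_cancel star_add)

lemma star_zero [simp]: "star 0 = 0"
  by (metis diff_self star_diff)

lemma smul_zero_left [simp]: "smul 0 x = 0"
  using smul_of_real[of 0 x] by simp

lemma smul_one [simp]: "smul 1 x = x"
  using smul_of_real[of 1 x] by simp

lemma smul_minus_left: "smul (- c) x = - smul c x"
  by (metis add.right_inverse add_eq_0_iff smul_add_left smul_zero_left)

lemma smul_diff_right: "smul c (x - y) = smul c x - smul c y"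
  by (metis add_diff_cancel_right' diff_add_cancel smul_add_right)

lemma smul_zero_right [simp]: "smul c 0 = 0"
  by (metis diff_self smul_diff_right)

lemma smul_minus_right: "smul c (- x) = - smul c x"
  by (metis diff_0 smul_diff_right smul_zero_right)

lemma smul_ii_cancel:
  assumes "smul \<i> x = smul \<i> y" shows "x = y"
proof -
  have "x = smul (- \<i>) (smul \<i> x)" by (simp add: smul_smul)
  also have "\<dots> = smul (- \<i>) (smul \<i> y)" by (simp add: assms)
  also have "\<dots> = y" by (simp add: smul_smul)
  finally show ?thesis .
qed

lemma is_unit_one: "is_unit mul one"
proof -
  obtain u where u: "is_unit mul u" using has_unit by blast
  have "v = u" if "is_unit mul v" for v
    using u that unfolding is_unit_def by metis
  thus ?thesis unfolding alg_one_def using u by (metis theI)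
qed

lemma mul_one_left [simp]: "mul one x = x"
  using is_unit_one unfolding is_unit_def by blast

lemma mul_one_right [simp]: "mul x one = x"
  using is_unit_one unfolding is_unit_def by blast

lemma star_one [simp]: "star one = one"
  by (metis mul_one_left star_mul star_star)

lemma trivial_if_one_eq_zero: "one = 0 \<Longrightarrow> (x::'a) = 0"
  using mul_one_right[of x] by simp

definition associator :: "'a \<Rightarrow> 'a \<Rightarrow> 'a \<Rightarrow> 'a" where
  "associator a b c = mul (mul a b) c - mul a (mul b c)"

lemma associator_add:
  "associator (a + a') b c = associator a b c + associator a' b c"
  "associator a (b + b') c = associator a b c + associator a b' c"
  "associator a b (c + c') = associator a b c + associator a b c'"
  unfolding associator_def by (simp_all add: mul_add_left mul_add_right)

lemma associator_left_alternating: "associator a a b = 0"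
  unfolding associator_def by (simp add: left_alternative)

lemma associator_right_alternating: "associator b a a = 0"
  unfolding associator_def by (simp add: right_alternative)

lemma associator_swap12: "associator a b c = - associator b a c"
proof -
  have "associator (a + b) (a + b) c = 0" by (rule associator_left_alternating)
  hence "associator a a c + associator a b c + (associator b a c + associator b b c) = 0"
    by (simp add: associator_add add_ac)
  thus ?thesis by (simp add: associator_left_alternating eq_neg_iff_add_eq_0)
qed

lemma associator_swap23: "associator a b c = - associator a c b"
proof -
  have "associator a (b + c) (b + c) = 0" by (rule associator_right_alternating)
  hence "associator a b b + associator a b c + (associator a c b + associator a c c) = 0"
    by (simp add: associator_add add_ac)
  thus ?thesis by (simp add: associator_right_alternating eq_neg_iff_add_eq_0)
qed

lemma associator_cycle: "associator a b c = associator b c a"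
  by (metis associator_swap12 associator_swap23 minus_minus)

lemma commuting_in_center:
  assumes comm: "\<And>x. mul z x = mul x z"
  shows "z \<in> alg_center mul"
proof -
  have assoc: "associator x y z = 0" for x y
  proof -
    have "associator x y z - associator x z y + associator z x y
        = (mul (mul x y) z - mul z (mul x y)) - (mul x (mul y z) - mul x (mul z y))
          - (mul (mul x z) y - mul (mul z x) y)"
      unfolding associator_def by (simp add: algebra_simps)
    also have "\<dots> = 0" by (simp add: comm)
    finally have "associator x y z + associator x y z + associator x y z = 0"
      using associator_swap23[of x y z] associator_cycle[of z x y] by simp
    moreover have "(3::real) *\<^sub>R associator x y z
        = associator x y z + associator x y z + associator x y z"
      using scaleR_add_left[of 2 1 "associator x y z"] by (simp add: scaleR_2)
    ultimately show ?thesis by simp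
  qed
  show ?thesis
    unfolding alg_center_def
    using comm assoc associator_cycle[of z] associator_swap23[of _ z]
    by (auto simp: associator_def)
qed

lemma jprod_zero_right: "jprod x 0 = 0" and jprod_zero_left: "jprod 0 y = 0"
  unfolding jordan_star_product_def by simp_all

lemma left_annihilator_skew_commuting:
  assumes "s \<in> left_annihilator jprod"
  shows "star s = - s" and "mul s x = mul x s"
proof -
  have "jprod s one = 0" and jprod_sx: "jprod s x = 0"
    using assms unfolding left_annihilator_def by blast+
  thus skew: "star s = - s"
    unfolding jordan_star_product_def by (simp add: eq_neg_iff_add_eq_0 add.commute)
  show "mul s x = mul x s"
    using jprod_sx unfolding jordan_star_product_def skew by (simp add: mul_minus_right)
qed

lemma imaginary_multiple_in_left_annihilator: "smul (\<i> * complex_of_real r) one \<in> left_annihilator jprod"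
  unfolding left_annihilator_def jordan_star_product_def
  by (simp add: star_smul mul_smul_left mul_smul_right flip: smul_add_left)

lemma right_annihilator_commuting:
  assumes z: "z \<in> right_annihilator jprod (products_with jprod (left_annihilator jprod))"
  shows "mul z x = mul x z"
proof -
  have herm: "mul (b + star b) z = mul z (b + star b)" for b
  proof -
    have hermitian: "star (b + star b) = b + star b"
      by (simp add: star_add star_star add.commute)
    have "smul \<i> one \<in> left_annihilator jprod"
      using imaginary_multiple_in_left_annihilator[of 1] by simp
    hence "jprod (jprod b (smul \<i> one)) z = 0"
      using z unfolding right_annihilator_def products_with_def by blast
    hence "0 = jprod (jprod b (smul \<i> one)) z" by simp
    also have "jprod b (smul \<i> one) = smul \<i> (b + star b)"
      unfolding jordan_star_product_def by (simp add: star_smul mul_smul_left mul_smul_right smul_add_right)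
    also have "jprod (smul \<i> (b + star b)) z
        = smul \<i> (mul (b + star b) z) - smul \<i> (mul z (b + star b))"
      unfolding jordan_star_product_def star_smul hermitian
      by (simp add: mul_smul_left mul_smul_right smul_minus_left mul_minus_right)
    finally show ?thesis by (simp add: smul_ii_cancel)
  qed
  \<comment> \<open>\<open>x\<close> is recovered from the Hermitian elements \<open>x + x\<^sup>*\<close> and \<open>ix + (ix)\<^sup>*\<close>\<close>
  have "smul \<i> (mul x z - mul (star x) z) = smul \<i> (mul z x - mul z (star x))"
    using herm[of "smul \<i> x"]
    by (simp add: star_smul mul_add_left mul_add_right mul_diff_left mul_diff_right
        mul_smul_left mul_smul_right smul_minus_left smul_diff_right algebra_simps)
  hence antisym: "mul x z - mul (star x) z = mul z x - mul z (star x)"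
    by (rule smul_ii_cancel)
  have sym: "mul x z + mul (star x) z = mul z x + mul z (star x)"
    using herm[of x] by (simp add: mul_add_left mul_add_right)
  have "(2::real) *\<^sub>R mul x z = (mul x z + mul (star x) z) + (mul x z - mul (star x) z)"
    by (simp add: scaleR_2)
  also have "\<dots> = (2::real) *\<^sub>R mul z x"
    unfolding sym antisym by (simp add: scaleR_2)
  finally show ?thesis by simp
qed

context
  assumes center: "alg_center mul = {smul c one | c. True}"
begin

lemma left_annihilator_jprod:
  assumes nontrivial: "one \<noteq> 0"
  shows "left_annihilator jprod = {smul (\<i> * complex_of_real r) one | r. True}"
proof (intro subset_antisym subsetI)
  fix z assume z: "z \<in> left_annihilator jprod"
  then obtain c where c: "z = smul c one"
    using center commuting_in_center left_annihilator_skew_commuting(2) by blast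
  have "smul (complex_of_real (2 * Re c)) one = smul (cnj c + c) one"
    by (metis add.commute complex_add_cnj)
  also have "\<dots> = 0"
    using left_annihilator_skew_commuting(1)[OF z] c by (simp add: star_smul smul_add_left)
  finally have "(2 * Re c) *\<^sub>R one = 0" by (simp only: smul_of_real)
  hence "Re c = 0" using nontrivial by simp
  hence "c = \<i> * complex_of_real (Im c)" by (simp add: complex_eq_iff)
  with c have "z = smul (\<i> * complex_of_real (Im c)) one" by metis
  thus "z \<in> {smul (\<i> * complex_of_real r) one | r. True}" by blast
qed (use imaginary_multiple_in_left_annihilator in blast)

lemma right_annihilator_jprod:
  "right_annihilator jprod (products_with jprod (left_annihilator jprod)) = {smul c one | c. True}"
proof (intro subset_antisym subsetI)
  fix z assume "z \<in> right_annihilator jprod (products_with jprod (left_annihilator jprod))"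
  thus "z \<in> {smul c one | c. True}"
    using center commuting_in_center right_annihilator_commuting by blast
next
  fix z assume "z \<in> {smul c one | c. True}"
  then obtain c where c: "z = smul c one" by blast
  have "jprod (jprod b s) z = 0" if s: "s \<in> left_annihilator jprod" for b s
  proof -
    have "star (jprod b s) = - jprod b s"
      unfolding jordan_star_product_def
      by (simp add: star_add star_mul star_star left_annihilator_skew_commuting(1)[OF s]
          mul_minus_left mul_minus_right)
    thus ?thesis
      unfolding c jordan_star_product_def[of _ _ "jprod b s"]
      by (simp add: mul_smul_left mul_smul_right smul_minus_right)
  qed
  thus "z \<in> right_annihilator jprod (products_with jprod (left_annihilator jprod))"
    unfolding right_annihilator_def products_with_def by blast
qed

end

end

lemma alt_Wstar_factor_unital_alt_star_algebra:
  assumes "alt_Wstar_factor smul mul star"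
  shows "unital_alt_star_algebra smul mul star"
  using assms unfolding alt_Wstar_factor_def alt_cstar_algebra_def
  by unfold_locales (simp_all add: algebra_simps)

theorem lemma2p5:
  fixes smulA :: "complex \<Rightarrow> 'a::banach \<Rightarrow> 'a" and mulA :: "'a \<Rightarrow> 'a \<Rightarrow> 'a"
    and starA :: "'a \<Rightarrow> 'a"
    and smulB :: "complex \<Rightarrow> 'b::banach \<Rightarrow> 'b" and mulB :: "'b \<Rightarrow> 'b \<Rightarrow> 'b"
    and starB :: "'b \<Rightarrow> 'b"
    and \<Phi> :: "'a \<Rightarrow> 'b"
  assumes A: "alt_Wstar_factor smulA mulA starA"
    and B: "alt_Wstar_factor smulB mulB starB"
    and p: "\<exists>p. is_projection mulA starA p \<and> p \<noteq> alg_one mulA"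
    and bij: "bij \<Phi>"
    and eq: "\<And>a b. \<Phi> (mulA a b + mulA b (starA a)) = mulB (\<Phi> a) (\<Phi> b) + mulB (\<Phi> b) (starB (\<Phi> a))"
  shows "\<Phi> ` {smulA (\<i> * complex_of_real r) (alg_one mulA) | r. True}
           = {smulB (\<i> * complex_of_real r) (alg_one mulB) | r. True} \<and>
         \<Phi> ` {smulA c (alg_one mulA) | c. True} = {smulB c (alg_one mulB) | c. True}"
proof -
  interpret a: unital_alt_star_algebra smulA mulA starA
    using A by (rule alt_Wstar_factor_unital_alt_star_algebra)
  interpret b: unital_alt_star_algebra smulB mulB starB
    using B by (rule alt_Wstar_factor_unital_alt_star_algebra)
  have hom: "\<Phi> (a.jprod x y) = b.jprod (\<Phi> x) (\<Phi> y)" for x y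
    unfolding jordan_star_product_def by (rule eq)
  have "\<Phi> 0 = 0"
    using bij hom a.jprod_zero_left b.jprod_zero_right by (rule bij_product_hom_zero)
  with bij hom interpret bij_product_hom \<Phi> a.jprod b.jprod
    by unfold_locales
  have centers: "alg_center mulA = {smulA c a.one | c. True}"
    "alg_center mulB = {smulB c b.one | c. True}"
    using A B unfolding alt_Wstar_factor_def by blast+
  \<comment> \<open>only \<open>p \<noteq> 0\<close> is used: it makes both algebras nontrivial\<close>
  obtain p :: 'a where "p \<noteq> 0" using p unfolding is_projection_def by blast
  hence nontrivial: "a.one \<noteq> 0" "b.one \<noteq> 0"
    using a.trivial_if_one_eq_zero b.trivial_if_one_eq_zero eq_zero_iff by blast+
  have "\<Phi> ` left_annihilator a.jprod = left_annihilator b.jprod"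
    and "\<Phi> ` right_annihilator a.jprod (products_with a.jprod (left_annihilator a.jprod))
      = right_annihilator b.jprod (products_with b.jprod (left_annihilator b.jprod))"
    by (simp_all add: image_left_annihilator image_right_annihilator image_products_with)
  thus ?thesis
    unfolding a.right_annihilator_jprod[OF centers(1)] b.right_annihilator_jprod[OF centers(2)]
    unfolding a.left_annihilator_jprod[OF centers(1) nontrivial(1)]
      b.left_annihilator_jprod[OF centers(2) nontrivial(2)]
    by (rule conjI)
qed

end
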